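(* Let $n\geq 2$ and let $B$ be a subgroup of $P\Sigma_n$. If the homomorphism $\tau_1^{(B)}:gr^1(B)=B^{ab}\to IA_n^{ab}$ (induced by the inclusion $B\subseteq IA_n$) is injective, then $\mathcal{A}_n(2)\cap B=\Gamma_2(B)$.
   Context: $F_n$ is the free group on $x_1,\dots,x_n$; $\Gamma_k$ denotes the lower central series ($\Gamma_1(G)=G$, $\Gamma_{k+1}(G)=(\Gamma_k(G),G)$), and $\mathcal{A}_n(k)=\{\phi\in\mathrm{Aut}(F_n): g^{-1}\phi(g)\in\Gamma_{k+1}(F_n)\ \forall g\in F_n\}$; $IA_n=\mathcal{A}_n(1)$. $P\Sigma_n$ (the McCool group) is the subgroup of $\mathrm{Aut}(F_n)$ generated by the automorphisms $\xi_{i,j}$, $1\leq i\neq j\leq n$, where $\xi_{i,j}(x_i)=x_j^{-1}x_ix_j$ and $\xi_{i,j}(x_l)=x_l$ for $l\neq i$. The map $\tau_1^{(B)}$ is the composition $gr^1(B)\to (B\cap\mathcal{A}_n(1))/(B\cap\mathcal{A}_n(2))\hookrightarrow \mathcal{A}_n(1)/\mathcal{A}_n(2)=IA_n^{ab}$. *)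

theory Defs
  imports "HOL-Algebra.Algebra"
begin

text \<open>A letter (i, True) stands for x_i, (i, False) for x_i^{-1}.\<close>
type_synonym letter = "nat \<times> bool"

definition cancels :: "letter \<Rightarrow> letter \<Rightarrow> bool" where
  "cancels a b \<longleftrightarrow> fst a = fst b \<and> snd a \<noteq> snd b"

fun reduced :: "letter list \<Rightarrow> bool" where
  "reduced [] = True"
| "reduced [a] = True"
| "reduced (a # b # w) = (\<not> cancels a b \<and> reduced (b # w))"

definition reduce :: "letter list \<Rightarrow> letter list" where
  "reduce w = foldr (\<lambda>a acc. case acc of [] \<Rightarrow> [a]
                        | b # rest \<Rightarrow> (if cancels a b then rest else a # acc)) w []"

definition inv_word :: "letter list \<Rightarrow> letter list" where
  "inv_word w = rev (map (\<lambda>(i, b). (i, \<not> b)) w)"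

definition free_group :: "nat \<Rightarrow> letter list monoid" where
  "free_group n = \<lparr> carrier = {w. reduced w \<and> (\<forall>a\<in>set w. fst a \<in> {1..n})},
                    monoid.mult = (\<lambda>u v. reduce (u @ v)),
                    one = [] \<rparr>"

definition subst_hom :: "nat \<Rightarrow> (nat \<Rightarrow> letter list) \<Rightarrow> letter list \<Rightarrow> letter list" where
  "subst_hom n f = (\<lambda>w \<in> carrier (free_group n).
      reduce (concat (map (\<lambda>(i, b). if b then f i else inv_word (f i)) w)))"

definition commutator :: "('a, 'b) monoid_scheme \<Rightarrow> 'a \<Rightarrow> 'a \<Rightarrow> 'a" where
  "commutator G x y = inv\<^bsub>G\<^esub> x \<otimes>\<^bsub>G\<^esub> inv\<^bsub>G\<^esub> y \<otimes>\<^bsub>G\<^esub> x \<otimes>\<^bsub>G\<^esub> y"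

text \<open>lcs G k = Gamma_k(G), with Gamma_1(G) = G (Gamma_0 also set to G).\<close>
fun lcs :: "('a, 'b) monoid_scheme \<Rightarrow> nat \<Rightarrow> 'a set" where
  "lcs G 0 = carrier G"
| "lcs G (Suc 0) = carrier G"
| "lcs G (Suc (Suc k)) =
     generate G (\<Union>x\<in>lcs G (Suc k). \<Union>y\<in>carrier G. {commutator G x y})"

abbreviation AutF :: "nat \<Rightarrow> (letter list \<Rightarrow> letter list) monoid" where
  "AutF n \<equiv> AutoGroup (free_group n)"

definition Andreadakis :: "nat \<Rightarrow> nat \<Rightarrow> (letter list \<Rightarrow> letter list) set" where
  "Andreadakis n k = {\<phi> \<in> auto (free_group n).
     \<forall>g \<in> carrier (free_group n).
       inv\<^bsub>free_group n\<^esub> g \<otimes>\<^bsub>free_group n\<^esub> \<phi> g \<in> lcs (free_group n) (Suc k)}"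

definition xi :: "nat \<Rightarrow> nat \<Rightarrow> nat \<Rightarrow> letter list \<Rightarrow> letter list" where
  "xi n i j = subst_hom n (\<lambda>l. if l = i then [(j, False), (i, True), (j, True)] else [(l, True)])"

definition McCool :: "nat \<Rightarrow> (letter list \<Rightarrow> letter list) set" where
  "McCool n = generate (AutF n) {xi n i j | i j. i \<in> {1..n} \<and> j \<in> {1..n} \<and> i \<noteq> j}"

abbreviation subgrp :: "nat \<Rightarrow> (letter list \<Rightarrow> letter list) set \<Rightarrow> (letter list \<Rightarrow> letter list) monoid" where
  "subgrp n B \<equiv> (AutF n)\<lparr>carrier := B\<rparr>"

abbreviation gr1 :: "nat \<Rightarrow> (letter list \<Rightarrow> letter list) set \<Rightarrow> (letter list \<Rightarrow> letter list) set monoid" where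
  "gr1 n B \<equiv> subgrp n B Mod lcs (subgrp n B) 2"

abbreviation IA_ab :: "nat \<Rightarrow> (letter list \<Rightarrow> letter list) set monoid" where
  "IA_ab n \<equiv> subgrp n (Andreadakis n 1) Mod Andreadakis n 2"

text \<open>tau_1^{(B)} sends the coset Gamma_2(B) b to the coset A_n(2) b.\<close>
definition tau1 :: "nat \<Rightarrow> (letter list \<Rightarrow> letter list) set \<Rightarrow> (letter list \<Rightarrow> letter list) set"
  where "tau1 n C = (\<Union>b\<in>C. Andreadakis n 2 #>\<^bsub>AutF n\<^esub> b)"

end

theory Submission
  imports Defs
begin

text \<open>
  The inclusion \<open>\<Gamma>\<^sub>2(B) \<subseteq> \<A>\<^sub>n(2)\<close> holds for every subgroup of \<open>IA\<^sub>n\<close>, and \<open>P\<Sigma>\<^sub>n \<subseteq> IA\<^sub>n\<close>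
  because each \<open>\<xi>\<^sub>i\<^sub>,\<^sub>j\<close> moves \<open>x\<^sub>i\<close> by the commutator \<open>[x\<^sub>i, x\<^sub>j]\<close>. That commutators of
  \<open>IA\<close>-automorphisms lie in \<open>\<A>(2)\<close> comes from computing modulo \<open>\<Gamma>\<^sub>3\<close>: there \<open>\<Gamma>\<^sub>2/\<Gamma>\<^sub>3\<close> is
  central, so an \<open>IA\<close>-automorphism fixes \<open>\<Gamma>\<^sub>2\<close> modulo \<open>\<Gamma>\<^sub>3\<close>, and two \<open>IA\<close>-automorphisms
  commute modulo \<open>\<Gamma>\<^sub>3\<close>. Conversely, if \<open>b \<in> \<A>\<^sub>n(2) \<inter> B\<close> then \<open>\<tau>\<^sub>1\<close> sends the cosets
  \<open>\<Gamma>\<^sub>2(B) b\<close> and \<open>\<Gamma>\<^sub>2(B)\<close> both to \<open>\<A>\<^sub>n(2)\<close>, so injectivity forces \<open>b \<in> \<Gamma>\<^sub>2(B)\<close>.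
\<close>

section \<open>Free reduction\<close>

definition reduce_step :: "letter \<Rightarrow> letter list \<Rightarrow> letter list" where
  "reduce_step a acc = (case acc of [] \<Rightarrow> [a] | b # rest \<Rightarrow> (if cancels a b then rest else a # acc))"

definition inv_letter :: "letter \<Rightarrow> letter" where
  "inv_letter a = (fst a, \<not> snd a)"

lemma reduce_eq_foldr: "reduce w = foldr reduce_step w []"
  unfolding reduce_def reduce_step_def by simp

lemma reduce_Cons: "reduce (a # w) = reduce_step a (reduce w)"
  by (simp add: reduce_eq_foldr)

lemma reduce_append: "reduce (u @ v) = foldr reduce_step u (reduce v)"
  by (simp add: reduce_eq_foldr)

lemma reduced_ConsD: "reduced (b # w) \<Longrightarrow> reduced w"
  by (cases w) auto

lemma reduced_reduce_step: "reduced s \<Longrightarrow> reduced (reduce_step a s)"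
  by (cases s) (auto simp: reduce_step_def intro: reduced_ConsD)

lemma reduced_foldr_reduce_step: "reduced s \<Longrightarrow> reduced (foldr reduce_step x s)"
  by (induction x) (auto intro: reduced_reduce_step)

lemma reduced_reduce: "reduced (reduce w)"
  by (simp add: reduce_eq_foldr reduced_foldr_reduce_step)

lemma set_foldr_reduce_step: "set (foldr reduce_step x s) \<subseteq> set x \<union> set s"
proof (induction x)
  case (Cons a x)
  have "set (reduce_step a t) \<subseteq> insert a (set t)" for t
    by (cases t) (auto simp: reduce_step_def)
  then show ?case using Cons by fastforce
qed simp

lemma set_reduce: "set (reduce w) \<subseteq> set w"
  using set_foldr_reduce_step[of w "[]"] by (simp add: reduce_eq_foldr)

lemma cancels_iff_inv_letter: "cancels a b \<longleftrightarrow> b = inv_letter a"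
  by (cases a; cases b) (auto simp: cancels_def inv_letter_def)

lemma inv_letter_inv_letter [simp]: "inv_letter (inv_letter a) = a"
  by (cases a) (simp add: inv_letter_def)

lemma reduce_step_inv_letter:
  assumes "reduced s"
  shows "reduce_step (inv_letter a) (reduce_step a s) = s"
proof (cases s)
  case Nil
  then show ?thesis by (simp add: reduce_step_def cancels_iff_inv_letter)
next
  case (Cons b rest)
  show ?thesis
  proof (cases "b = inv_letter a")
    case b: True
    show ?thesis
    proof (cases rest)
      case Nil
      then show ?thesis using Cons b by (simp add: reduce_step_def cancels_iff_inv_letter)
    next
      case (Cons c rest')
      then have "c \<noteq> a" using assms \<open>s = b # rest\<close> b by (simp add: cancels_iff_inv_letter)
      then show ?thesis using \<open>s = b # rest\<close> Cons b by (simp add: reduce_step_def cancels_iff_inv_letter)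
    qed
  next
    case False
    then show ?thesis using Cons by (simp add: reduce_step_def cancels_iff_inv_letter)
  qed
qed

lemma reduce_reduced: "reduced w \<Longrightarrow> reduce w = w"
proof (induction w)
  case (Cons a w)
  then have IH: "reduce w = w" using reduced_ConsD by blast
  show ?case
    using Cons.prems IH by (cases w) (simp_all add: reduce_Cons reduce_step_def)
qed (simp add: reduce_eq_foldr)

lemma foldr_reduce_step_reduce_step:
  assumes "reduced s"
  shows "foldr reduce_step (reduce_step a r) s = reduce_step a (foldr reduce_step r s)"
proof (cases r)
  case (Cons b rest)
  show ?thesis
  proof (cases "a = inv_letter b")
    case True
    then show ?thesis
      using Cons reduce_step_inv_letter[OF reduced_foldr_reduce_step[OF assms], of b rest]
      by (simp add: reduce_step_def cancels_iff_inv_letter)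
  next
    case False
    then show ?thesis using Cons by (auto simp: reduce_step_def cancels_iff_inv_letter)
  qed
qed (simp add: reduce_step_def)

lemma foldr_reduce: "reduced s \<Longrightarrow> foldr reduce_step (reduce x) s = foldr reduce_step x s"
  by (induction x) (simp_all add: reduce_Cons foldr_reduce_step_reduce_step reduce_eq_foldr)

lemma inv_word_Nil [simp]: "inv_word [] = []"
  by (simp add: inv_word_def)

lemma inv_word_Cons [simp]: "inv_word (a # w) = inv_word w @ [inv_letter a]"
  by (cases a) (simp add: inv_word_def inv_letter_def)

lemma inv_word_inv_word [simp]: "inv_word (inv_word w) = w"
  by (induction w) (auto simp: inv_word_def)

lemma fst_set_inv_word: "fst ` set (inv_word w) = fst ` set w"
  by (force simp: inv_word_def image_iff)

lemma foldr_inv_word: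
  "reduced s \<Longrightarrow> foldr reduce_step (inv_word w) (foldr reduce_step w s) = s"
  by (induction w) (simp_all add: reduce_step_inv_letter reduced_foldr_reduce_step)

lemma foldr_inv_word':
  "reduced s \<Longrightarrow> foldr reduce_step w (foldr reduce_step (inv_word w) s) = s"
  using foldr_inv_word[of s "inv_word w"] by simp

lemma carrier_free_group:
  "carrier (free_group n) = {w. reduced w \<and> (\<forall>a\<in>set w. fst a \<in> {1..n})}"
  by (simp add: free_group_def)

lemma mult_free_group: "x \<otimes>\<^bsub>free_group n\<^esub> y = reduce (x @ y)"
  by (simp add: free_group_def)

lemma one_free_group: "\<one>\<^bsub>free_group n\<^esub> = []"
  by (simp add: free_group_def)

lemma mult_free_group_foldr:
  "y \<in> carrier (free_group n) \<Longrightarrow> x \<otimes>\<^bsub>free_group n\<^esub> y = foldr reduce_step x y"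
  by (simp add: mult_free_group reduce_append carrier_free_group reduce_reduced)

lemma reduce_in_carrier_free_group:
  "\<forall>a\<in>set w. fst a \<in> {1..n} \<Longrightarrow> reduce w \<in> carrier (free_group n)"
  using set_reduce[of w] reduced_reduce[of w] by (auto simp: carrier_free_group)

lemma group_free_group: "group (free_group n)"
proof (rule groupI)
  fix x y
  assume "x \<in> carrier (free_group n)" "y \<in> carrier (free_group n)"
  then show "x \<otimes>\<^bsub>free_group n\<^esub> y \<in> carrier (free_group n)"
    unfolding mult_free_group
    by (intro reduce_in_carrier_free_group) (auto simp: carrier_free_group)
next
  fix x y z
  assume "x \<in> carrier (free_group n)" and y: "y \<in> carrier (free_group n)"
    and z: "z \<in> carrier (free_group n)"
  have yz: "y \<otimes>\<^bsub>free_group n\<^esub> z \<in> carrier (free_group n)"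
    using y z unfolding mult_free_group
    by (intro reduce_in_carrier_free_group) (auto simp: carrier_free_group)
  have "foldr reduce_step x y = reduce (x @ y)"
    using y by (simp add: reduce_append reduce_reduced carrier_free_group)
  then have "foldr reduce_step (foldr reduce_step x y) z = foldr reduce_step (x @ y) z"
    using z by (simp add: foldr_reduce carrier_free_group)
  then show "x \<otimes>\<^bsub>free_group n\<^esub> y \<otimes>\<^bsub>free_group n\<^esub> z =
             x \<otimes>\<^bsub>free_group n\<^esub> (y \<otimes>\<^bsub>free_group n\<^esub> z)"
    using y z yz by (simp add: mult_free_group_foldr)
next
  show "\<one>\<^bsub>free_group n\<^esub> \<in> carrier (free_group n)"
    by (simp add: one_free_group carrier_free_group)
next
  fix x
  assume "x \<in> carrier (free_group n)"
  then show "\<one>\<^bsub>free_group n\<^esub> \<otimes>\<^bsub>free_group n\<^esub> x = x"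
    by (simp add: one_free_group mult_free_group reduce_reduced carrier_free_group)
next
  fix x
  assume x: "x \<in> carrier (free_group n)"
  then have rx: "reduced x" by (simp add: carrier_free_group)
  have "reduce (inv_word x) \<in> carrier (free_group n)"
    using x by (intro reduce_in_carrier_free_group) (auto simp: carrier_free_group inv_word_def)
  moreover have "reduce (inv_word x) \<otimes>\<^bsub>free_group n\<^esub> x = \<one>\<^bsub>free_group n\<^esub>"
  proof -
    have "foldr reduce_step (inv_word x) x = []"
      using foldr_inv_word[of "[]" x] reduce_reduced[OF rx] by (simp add: reduce_eq_foldr)
    then show ?thesis using x by (simp add: mult_free_group_foldr foldr_reduce rx one_free_group)
  qed
  ultimately show "\<exists>y\<in>carrier (free_group n). y \<otimes>\<^bsub>free_group n\<^esub> x = \<one>\<^bsub>free_group n\<^esub>"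
    by blast
qed

definition subst_letter :: "(nat \<Rightarrow> letter list) \<Rightarrow> letter \<Rightarrow> letter list" where
  "subst_letter f = (\<lambda>(i, b). if b then f i else inv_word (f i))"

definition subst_word :: "(nat \<Rightarrow> letter list) \<Rightarrow> letter list \<Rightarrow> letter list" where
  "subst_word f w = concat (map (subst_letter f) w)"

lemma subst_word_Cons: "subst_word f (a # r) = subst_letter f a @ subst_word f r"
  by (simp add: subst_word_def)

lemma subst_hom_eq_reduce:
  "w \<in> carrier (free_group n) \<Longrightarrow> subst_hom n f w = reduce (subst_word f w)"
  by (simp add: subst_hom_def subst_word_def subst_letter_def)

lemma subst_letter_inv_letter:
  "reduced t \<Longrightarrow>
   foldr reduce_step (subst_letter f (inv_letter a)) (foldr reduce_step (subst_letter f a) t) = t"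
  by (cases a) (auto simp: subst_letter_def inv_letter_def foldr_inv_word foldr_inv_word')

lemma foldr_subst_word_reduce_step:
  assumes "reduced t"
  shows "foldr reduce_step (subst_word f (reduce_step a r)) t =
         foldr reduce_step (subst_letter f a) (foldr reduce_step (subst_word f r) t)"
proof (cases r)
  case (Cons b rest)
  show ?thesis
  proof (cases "a = inv_letter b")
    case True
    then show ?thesis
      using Cons subst_letter_inv_letter[OF reduced_foldr_reduce_step[OF assms], of f b "subst_word f rest"]
      by (simp add: reduce_step_def cancels_iff_inv_letter subst_word_Cons)
  next
    case False
    then show ?thesis using Cons by (auto simp: reduce_step_def cancels_iff_inv_letter subst_word_Cons)
  qed
qed (simp add: reduce_step_def subst_word_def)

lemma foldr_subst_word_reduce:
  "reduced t \<Longrightarrow> foldr reduce_step (subst_word f (reduce x)) t = foldr reduce_step (subst_word f x) t"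
  by (induction x) (simp_all add: reduce_Cons foldr_subst_word_reduce_step subst_word_Cons,
      simp add: reduce_eq_foldr subst_word_def)

lemma subst_hom_closed:
  assumes f: "\<And>i. i \<in> {1..n} \<Longrightarrow> f i \<in> carrier (free_group n)"
    and w: "w \<in> carrier (free_group n)"
  shows "subst_hom n f w \<in> carrier (free_group n)"
proof -
  have "fst a \<in> {1..n}" if "a \<in> set (subst_word f w)" for a
  proof -
    have "a \<in> (\<Union>c\<in>set w. set (subst_letter f c))"
      using that by (simp add: subst_word_def)
    then obtain c where c: "c \<in> set w" "a \<in> set (subst_letter f c)" by blast
    then have "fst c \<in> {1..n}" using w by (auto simp: carrier_free_group)
    then have "\<forall>x\<in>set (f (fst c)). fst x \<in> {1..n}" using f by (auto simp: carrier_free_group)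
    moreover have "fst a \<in> fst ` set (f (fst c))"
      using c(2) fst_set_inv_word[of "f (fst c)"]
      by (cases c) (force simp: subst_letter_def split: if_splits)
    ultimately show ?thesis by auto
  qed
  then show ?thesis using w by (simp add: subst_hom_eq_reduce reduce_in_carrier_free_group)
qed

lemma subst_hom_hom:
  assumes f: "\<And>i. i \<in> {1..n} \<Longrightarrow> f i \<in> carrier (free_group n)"
  shows "subst_hom n f \<in> hom (free_group n) (free_group n)"
proof (rule homI)
  fix x y
  assume x: "x \<in> carrier (free_group n)" and y: "y \<in> carrier (free_group n)"
  have xy: "x \<otimes>\<^bsub>free_group n\<^esub> y \<in> carrier (free_group n)"
    using x y by (simp add: group.is_monoid[OF group_free_group] monoid.m_closed)
  have "subst_hom n f (x \<otimes>\<^bsub>free_group n\<^esub> y) = foldr reduce_step (subst_word f (reduce (x @ y))) []"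
    using xy by (simp add: subst_hom_eq_reduce reduce_eq_foldr mult_free_group)
  also have "\<dots> = foldr reduce_step (subst_word f x) (foldr reduce_step (subst_word f y) [])"
    by (simp add: foldr_subst_word_reduce) (simp add: subst_word_def)
  also have "\<dots> = subst_hom n f x \<otimes>\<^bsub>free_group n\<^esub> subst_hom n f y"
    using x y subst_hom_closed[OF f y]
    by (simp add: mult_free_group_foldr subst_hom_eq_reduce foldr_reduce reduced_reduce
        flip: reduce_eq_foldr)
  finally show "subst_hom n f (x \<otimes>\<^bsub>free_group n\<^esub> y) =
     subst_hom n f x \<otimes>\<^bsub>free_group n\<^esub> subst_hom n f y" .
qed (use f subst_hom_closed in blast)

lemma generator_in_carrier: "l \<in> {1..n} \<Longrightarrow> [(l, b)] \<in> carrier (free_group n)"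
  by (simp add: carrier_free_group)

lemma inv_generator: "l \<in> {1..n} \<Longrightarrow> inv\<^bsub>free_group n\<^esub> [(l, True)] = [(l, False)]"
  by (rule group.inv_equality[OF group_free_group])
    (simp_all add: mult_free_group one_free_group reduce_eq_foldr reduce_step_def cancels_def
      generator_in_carrier)

lemma subst_hom_generator:
  "l \<in> {1..n} \<Longrightarrow> reduced (f l) \<Longrightarrow> subst_hom n f [(l, True)] = f l"
  by (simp add: subst_hom_eq_reduce generator_in_carrier subst_word_def subst_letter_def
      reduce_reduced)

lemma free_group_carrier_subset_subgroup:
  assumes H: "subgroup H (free_group n)" and gens: "\<And>l. l \<in> {1..n} \<Longrightarrow> [(l, True)] \<in> H"
  shows "carrier (free_group n) \<subseteq> H"
proof
  fix w
  assume "w \<in> carrier (free_group n)"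
  then show "w \<in> H"
  proof (induction w)
    case Nil
    then show ?case using subgroup.one_closed[OF H] by (simp add: one_free_group)
  next
    case (Cons a w)
    have rw: "reduced (a # w)" and la: "fst a \<in> {1..n}"
      using Cons.prems by (auto simp: carrier_free_group)
    have wc: "w \<in> carrier (free_group n)"
      using Cons.prems reduced_ConsD[OF rw] by (simp add: carrier_free_group)
    have "[a] \<in> H"
      using gens[OF la] subgroup.m_inv_closed[OF H gens[OF la]] inv_generator[OF la]
      by (cases a; cases "snd a") auto
    moreover have "[a] \<otimes>\<^bsub>free_group n\<^esub> w = a # w"
      using reduce_reduced[OF rw] by (simp add: mult_free_group)
    ultimately show ?case using subgroup.m_closed[OF H _ Cons.IH[OF wc]] by metis
  qed
qed

section \<open>Commutators and the lower central series\<close>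

declare lcs.simps [simp del]

lemma lcs_Suc_Suc:
  "lcs G (Suc (Suc k)) = generate G (\<Union>x\<in>lcs G (Suc k). \<Union>y\<in>carrier G. {commutator G x y})"
  by (simp add: lcs.simps)

lemma lcs_2: "lcs G 2 = generate G (\<Union>x\<in>carrier G. \<Union>y\<in>carrier G. {commutator G x y})"
  by (simp add: numeral_2_eq_2 lcs_Suc_Suc lcs.simps)

context group
begin

lemma group_homI: "group H \<Longrightarrow> h \<in> hom G H \<Longrightarrow> group_hom G H h"
  by (simp add: group_hom_def group_hom_axioms_def is_group)

lemma inv_mult_cancel_left [simp]: "x \<in> carrier G \<Longrightarrow> z \<in> carrier G \<Longrightarrow> inv x \<otimes> (x \<otimes> z) = z"
  by (simp add: m_assoc [symmetric])

lemma mult_inv_cancel_left [simp]: "x \<in> carrier G \<Longrightarrow> z \<in> carrier G \<Longrightarrow> x \<otimes> (inv x \<otimes> z) = z"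
  by (simp add: m_assoc [symmetric])

lemma commutator_closed [simp]:
  "x \<in> carrier G \<Longrightarrow> y \<in> carrier G \<Longrightarrow> commutator G x y \<in> carrier G"
  by (simp add: commutator_def)

lemma normal_rcos_eq_iff:
  assumes "N \<lhd> G" and a: "a \<in> carrier G" and b: "b \<in> carrier G"
  shows "N #> a = N #> b \<longleftrightarrow> inv a \<otimes> b \<in> N"
proof
  interpret N: normal N G by (rule assms(1))
  assume "N #> a = N #> b"
  then have "b \<in> N #> a" using rcos_self[OF b N.subgroup_axioms] by simp
  then obtain m where "m \<in> N" "b = m \<otimes> a" by (auto simp: r_coset_def)
  then show "inv a \<otimes> b \<in> N" using N.inv_op_closed1[OF a] a N.subset by (auto simp: m_assoc)
next
  interpret N: normal N G by (rule assms(1))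
  assume "inv a \<otimes> b \<in> N"
  then have "a \<otimes> (inv a \<otimes> b) \<otimes> inv a \<in> N" by (rule N.inv_op_closed2[OF a])
  then have "b \<in> N #> a" using rcosI[OF _ N.subset a] a b by (fastforce simp: m_assoc)
  then show "N #> a = N #> b" using repr_independence[OF _ a N.subgroup_axioms] by blast
qed

lemma equalizer_subgroup:
  assumes "group H" and "f \<in> hom G H" and "g \<in> hom G H"
  shows "subgroup {x \<in> carrier G. f x = g x} G"
proof -
  interpret f: group_hom G H f by (rule group_homI[OF assms(1,2)])
  interpret g: group_hom G H g by (rule group_homI[OF assms(1,3)])
  show ?thesis by (rule subgroupI) auto
qed

lemma twisted_subgroup:
  assumes N: "N \<lhd> G" and \<phi>: "\<phi> \<in> hom G G"
  shows "subgroup {g \<in> carrier G. inv g \<otimes> \<phi> g \<in> N} G"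
proof -
  interpret N: normal N G by (rule N)
  interpret \<phi>: group_hom G G \<phi> by (rule group_homI[OF is_group \<phi>])
  show ?thesis
  proof (rule subgroupI)
    fix a
    assume "a \<in> {g \<in> carrier G. inv g \<otimes> \<phi> g \<in> N}"
    then have a: "a \<in> carrier G" and "inv a \<otimes> \<phi> a \<in> N" by auto
    then have "a \<otimes> inv (inv a \<otimes> \<phi> a) \<otimes> inv a \<in> N"
      by (intro N.inv_op_closed2 N.m_inv_closed)
    also have "a \<otimes> inv (inv a \<otimes> \<phi> a) \<otimes> inv a = inv (inv a) \<otimes> \<phi> (inv a)"
      using a by (simp add: inv_mult_group m_assoc)
    finally show "inv a \<in> {g \<in> carrier G. inv g \<otimes> \<phi> g \<in> N}" using a by simp
  next
    fix a b
    assume "a \<in> {g \<in> carrier G. inv g \<otimes> \<phi> g \<in> N}" "b \<in> {g \<in> carrier G. inv g \<otimes> \<phi> g \<in> N}"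
    then have a: "a \<in> carrier G" "inv a \<otimes> \<phi> a \<in> N" and b: "b \<in> carrier G" "inv b \<otimes> \<phi> b \<in> N"
      by auto
    have "inv b \<otimes> (inv a \<otimes> \<phi> a) \<otimes> b \<otimes> (inv b \<otimes> \<phi> b) \<in> N"
      by (rule N.m_closed[OF N.inv_op_closed1[OF b(1) a(2)] b(2)])
    also have "inv b \<otimes> (inv a \<otimes> \<phi> a) \<otimes> b \<otimes> (inv b \<otimes> \<phi> b) = inv (a \<otimes> b) \<otimes> \<phi> (a \<otimes> b)"
      using a b by (simp add: inv_mult_group m_assoc)
    finally show "a \<otimes> b \<in> {g \<in> carrier G. inv g \<otimes> \<phi> g \<in> N}" using a b by simp
  qed auto
qed

lemma commutator_mult_central_left:
  assumes U: "U \<in> carrier G" and V: "V \<in> carrier G" and A: "A \<in> carrier G"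
    and central: "\<And>Z. Z \<in> carrier G \<Longrightarrow> A \<otimes> Z = Z \<otimes> A"
  shows "commutator G (U \<otimes> A) V = commutator G U V"
proof -
  let ?C = "inv U \<otimes> inv V \<otimes> U \<otimes> V"
  have "commutator G (U \<otimes> A) V = inv A \<otimes> (inv U \<otimes> (inv V \<otimes> (U \<otimes> (A \<otimes> V))))"
    using U V A by (simp add: commutator_def inv_mult_group m_assoc)
  also have "\<dots> = inv A \<otimes> (?C \<otimes> A)"
    using U V A by (simp add: central[OF V] m_assoc)
  also have "\<dots> = inv A \<otimes> (A \<otimes> ?C)"
    using U V by (simp add: central)
  also have "\<dots> = ?C"
    using U V A by simp
  finally show ?thesis by (simp add: commutator_def)
qed

lemma commutator_mult_central_right:
  assumes U: "U \<in> carrier G" and V: "V \<in> carrier G" and B: "B \<in> carrier G"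
    and central: "\<And>Z. Z \<in> carrier G \<Longrightarrow> B \<otimes> Z = Z \<otimes> B"
  shows "commutator G U (V \<otimes> B) = commutator G U V"
proof -
  let ?C = "inv U \<otimes> inv V \<otimes> U \<otimes> V"
  have "inv U \<otimes> inv B = inv B \<otimes> inv U"
    using U B central[of U] by (metis inv_mult_group)
  moreover have "commutator G U (V \<otimes> B) = inv U \<otimes> inv B \<otimes> (inv V \<otimes> (U \<otimes> (V \<otimes> B)))"
    using U V B by (simp add: commutator_def inv_mult_group m_assoc)
  ultimately have "commutator G U (V \<otimes> B) = inv B \<otimes> (?C \<otimes> B)"
    using U V B by (simp add: m_assoc)
  also have "\<dots> = inv B \<otimes> (B \<otimes> ?C)"
    using U V by (simp add: central)
  also have "\<dots> = ?C"
    using U V B by simp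
  finally show ?thesis by (simp add: commutator_def)
qed

lemma lcs_Suc_normal: "lcs G (Suc k) \<lhd> G"
proof (induction k)
  case 0
  show ?case by (simp add: lcs.simps normal_invI[OF subgroup_self])
next
  case (Suc k)
  interpret N: normal "lcs G (Suc k)" G by (rule Suc.IH)
  let ?T = "\<Union>x\<in>lcs G (Suc k). \<Union>y\<in>carrier G. {commutator G x y}"
  have "generate G ?T \<lhd> G"
  proof (rule normal_generateI)
    show "?T \<subseteq> carrier G" using N.subset by auto
  next
    fix c g
    assume "c \<in> ?T" and g: "g \<in> carrier G"
    then obtain x y where x: "x \<in> lcs G (Suc k)" and y: "y \<in> carrier G"
      and c: "c = commutator G x y" by blast
    have "g \<otimes> c \<otimes> inv g = commutator G (g \<otimes> x \<otimes> inv g) (g \<otimes> y \<otimes> inv g)"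
      using g x y N.subset by (auto simp: c commutator_def inv_mult_group m_assoc)
    moreover have "g \<otimes> x \<otimes> inv g \<in> lcs G (Suc k)" using N.inv_op_closed2 g x by blast
    ultimately show "g \<otimes> c \<otimes> inv g \<in> ?T" using g y by blast
  qed
  then show ?case by (simp add: lcs_Suc_Suc)
qed

lemma lcs_normal: "lcs G k \<lhd> G"
  using lcs_Suc_normal[of 0] lcs_Suc_normal by (cases k) (simp_all add: lcs.simps)

lemma lcs_subgroup: "subgroup (lcs G k) G"
  using lcs_normal normal_imp_subgroup by blast

lemma lcs_subset: "lcs G k \<subseteq> carrier G"
  using lcs_subgroup subgroup.subset by blast

lemma commutator_in_lcs:
  "x \<in> lcs G (Suc k) \<Longrightarrow> y \<in> carrier G \<Longrightarrow> commutator G x y \<in> lcs G (Suc (Suc k))"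
  by (auto simp: lcs_Suc_Suc intro: generate.incl)

lemma (in group_hom) hom_commutator:
  "x \<in> carrier G \<Longrightarrow> y \<in> carrier G \<Longrightarrow> h (commutator G x y) = commutator H (h x) (h y)"
  by (simp add: commutator_def)

lemma hom_lcs_Suc: "h \<in> hom G G \<Longrightarrow> x \<in> lcs G (Suc k) \<Longrightarrow> h x \<in> lcs G (Suc k)"
proof (induction k arbitrary: x)
  case 0
  then show ?case by (auto simp: lcs.simps hom_def)
next
  case (Suc k)
  interpret h: group_hom G G h by (rule group_homI[OF is_group Suc.prems(1)])
  let ?T = "\<Union>x\<in>lcs G (Suc k). \<Union>y\<in>carrier G. {commutator G x y}"
  have T: "?T \<subseteq> carrier G" using lcs_subset[of "Suc k"] by auto
  have "h ` ?T \<subseteq> ?T"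
  proof clarify
    fix x y
    assume x: "x \<in> lcs G (Suc k)" and y: "y \<in> carrier G"
    have "h (commutator G x y) = commutator G (h x) (h y)"
      using x y lcs_subset by (blast intro: h.hom_commutator)
    moreover have "h x \<in> lcs G (Suc k)" and "h y \<in> carrier G"
      using x y Suc.IH[OF Suc.prems(1)] by auto
    ultimately show "h (commutator G x y) \<in> ?T" by blast
  qed
  then have "h ` generate G ?T \<subseteq> generate G ?T"
    using h.generate_img[OF T] mono_generate by blast
  then show ?case using Suc.prems(2) by (auto simp: lcs_Suc_Suc)
qed

lemma hom_lcs: "h \<in> hom G G \<Longrightarrow> x \<in> lcs G k \<Longrightarrow> h x \<in> lcs G k"
  using hom_lcs_Suc[of h x 0] hom_lcs_Suc by (cases k) (simp_all add: lcs.simps)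

end

section \<open>Endomorphisms acting trivially on \<open>G/\<Gamma>\<^sub>2\<close>, modulo \<open>\<Gamma>\<^sub>3\<close>\<close>

context group
begin

lemma lcs_central_mod_next:
  assumes c: "c \<in> lcs G (Suc k)" and z: "z \<in> carrier G"
  shows "lcs G (Suc (Suc k)) #> (z \<otimes> c) = lcs G (Suc (Suc k)) #> (c \<otimes> z)"
proof -
  have "c \<in> carrier G" using c lcs_subset by blast
  then have "inv (z \<otimes> c) \<otimes> (c \<otimes> z) = commutator G c z"
    using z by (simp add: commutator_def inv_mult_group m_assoc)
  then show ?thesis
    using normal_rcos_eq_iff[OF lcs_normal] commutator_in_lcs[OF c z] \<open>c \<in> carrier G\<close> z by simp
qed

lemma lcs_2_central_mod_3:
  "c \<in> lcs G 2 \<Longrightarrow> z \<in> carrier G \<Longrightarrow> lcs G 3 #> (z \<otimes> c) = lcs G 3 #> (c \<otimes> z)"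
  using lcs_central_mod_next[of c 1 z] by (simp add: numeral_3_eq_3 numeral_2_eq_2)

lemma lcs_3_coset_commutator_fixed:
  assumes \<phi>: "\<phi> \<in> hom G G" and IA: "\<forall>g\<in>carrier G. inv g \<otimes> \<phi> g \<in> lcs G 2"
    and x: "x \<in> carrier G" and y: "y \<in> carrier G"
  shows "lcs G 3 #> \<phi> (commutator G x y) = lcs G 3 #> commutator G x y"
proof -
  let ?Q = "G Mod lcs G 3"
  let ?p = "\<lambda>a. lcs G 3 #> a"
  interpret Q: group ?Q by (rule normal.factorgroup_is_group[OF lcs_normal])
  interpret p: group_hom G ?Q ?p
    by (rule group_homI[OF Q.is_group normal.r_coset_hom_Mod[OF lcs_normal]])
  interpret \<phi>: group_hom G G \<phi> by (rule group_homI[OF is_group \<phi>])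
  have shift: "?p (\<phi> g) = ?p g \<otimes>\<^bsub>?Q\<^esub> ?p (inv g \<otimes> \<phi> g)" if g: "g \<in> carrier G" for g
  proof -
    have "?p (\<phi> g) = ?p (g \<otimes> (inv g \<otimes> \<phi> g))" using g by simp
    also have "\<dots> = ?p g \<otimes>\<^bsub>?Q\<^esub> ?p (inv g \<otimes> \<phi> g)" using g by (intro p.hom_mult) auto
    finally show ?thesis .
  qed
  have central: "?p (inv g \<otimes> \<phi> g) \<otimes>\<^bsub>?Q\<^esub> Z = Z \<otimes>\<^bsub>?Q\<^esub> ?p (inv g \<otimes> \<phi> g)"
    if g: "g \<in> carrier G" and Z: "Z \<in> carrier ?Q" for g Z
  proof -
    obtain z where z: "z \<in> carrier G" "Z = ?p z" using Z by (auto simp: carrier_FactGroup)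
    have "?p (inv g \<otimes> \<phi> g) \<otimes>\<^bsub>?Q\<^esub> Z = ?p ((inv g \<otimes> \<phi> g) \<otimes> z)"
      unfolding z(2) using g z by (intro p.hom_mult [symmetric]) auto
    also have "\<dots> = ?p (z \<otimes> (inv g \<otimes> \<phi> g))"
      by (rule lcs_2_central_mod_3 [symmetric]) (use IA g z in auto)
    also have "\<dots> = Z \<otimes>\<^bsub>?Q\<^esub> ?p (inv g \<otimes> \<phi> g)"
      unfolding z(2) using g z by (intro p.hom_mult) auto
    finally show ?thesis .
  qed
  have "?p (\<phi> (commutator G x y)) = commutator ?Q (?p (\<phi> x)) (?p (\<phi> y))"
    using x y by (simp add: \<phi>.hom_commutator p.hom_commutator)
  also have "\<dots> = commutator ?Q (?p x \<otimes>\<^bsub>?Q\<^esub> ?p (inv x \<otimes> \<phi> x)) (?p y \<otimes>\<^bsub>?Q\<^esub> ?p (inv y \<otimes> \<phi> y))"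
    using x y by (simp only: shift)
  also have "\<dots> = commutator ?Q (?p x) (?p y \<otimes>\<^bsub>?Q\<^esub> ?p (inv y \<otimes> \<phi> y))"
    using x y
    by (intro Q.commutator_mult_central_left[OF _ _ _ central[OF x]] Q.m_closed p.hom_closed) auto
  also have "\<dots> = commutator ?Q (?p x) (?p y)"
    using x y by (intro Q.commutator_mult_central_right[OF _ _ _ central[OF y]] p.hom_closed) auto
  also have "\<dots> = ?p (commutator G x y)"
    using x y by (simp add: p.hom_commutator)
  finally show ?thesis .
qed

lemma lcs_3_coset_fixed:
  assumes \<phi>: "\<phi> \<in> hom G G" and IA: "\<forall>g\<in>carrier G. inv g \<otimes> \<phi> g \<in> lcs G 2"
    and c: "c \<in> lcs G 2"
  shows "lcs G 3 #> \<phi> c = lcs G 3 #> c"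
proof -
  let ?E = "{x \<in> carrier G. inv x \<otimes> \<phi> x \<in> lcs G 3}"
  have "commutator G x y \<in> ?E" if x: "x \<in> carrier G" and y: "y \<in> carrier G" for x y
    using lcs_3_coset_commutator_fixed[OF \<phi> IA x y, symmetric] x y \<phi>
    by (simp add: normal_rcos_eq_iff[OF lcs_normal] hom_in_carrier)
  then have "lcs G 2 \<subseteq> ?E"
    unfolding lcs_2 by (intro generate_subgroup_incl twisted_subgroup[OF lcs_normal \<phi>]) blast
  then have "c \<in> carrier G" and "inv c \<otimes> \<phi> c \<in> lcs G 3" using c by auto
  then show ?thesis
    using \<phi> by (simp add: normal_rcos_eq_iff[OF lcs_normal] hom_in_carrier eq_commute)
qed

lemma lcs_3_cosets_commute:
  assumes \<phi>: "\<phi> \<in> hom G G" and \<phi>_IA: "\<forall>g\<in>carrier G. inv g \<otimes> \<phi> g \<in> lcs G 2"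
    and \<psi>: "\<psi> \<in> hom G G" and \<psi>_IA: "\<forall>g\<in>carrier G. inv g \<otimes> \<psi> g \<in> lcs G 2"
    and g: "g \<in> carrier G"
  shows "lcs G 3 #> \<phi> (\<psi> g) = lcs G 3 #> \<psi> (\<phi> g)"
proof -
  let ?Q = "G Mod lcs G 3"
  let ?p = "\<lambda>a. lcs G 3 #> a"
  interpret Q: group ?Q by (rule normal.factorgroup_is_group[OF lcs_normal])
  interpret p: group_hom G ?Q ?p
    by (rule group_homI[OF Q.is_group normal.r_coset_hom_Mod[OF lcs_normal]])
  interpret \<phi>: group_hom G G \<phi> by (rule group_homI[OF is_group \<phi>])
  interpret \<psi>: group_hom G G \<psi> by (rule group_homI[OF is_group \<psi>])
  define a where "a = inv g \<otimes> \<phi> g"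
  define b where "b = inv g \<otimes> \<psi> g"
  have a: "a \<in> lcs G 2" "a \<in> carrier G" and b: "b \<in> lcs G 2" "b \<in> carrier G"
    using \<phi>_IA \<psi>_IA g by (simp_all add: a_def b_def)
  have \<phi>g: "\<phi> g = g \<otimes> a" and \<psi>g: "\<psi> g = g \<otimes> b"
    using g by (simp_all add: a_def b_def)
  have "?p (b \<otimes> a) = ?p (a \<otimes> b)"
    by (rule lcs_2_central_mod_3) (use a b in auto)
  then have "?p a \<otimes>\<^bsub>?Q\<^esub> ?p b = ?p b \<otimes>\<^bsub>?Q\<^esub> ?p a"
    using a b by (simp only: p.hom_mult [symmetric])
  then have ab: "?p g \<otimes>\<^bsub>?Q\<^esub> ?p a \<otimes>\<^bsub>?Q\<^esub> ?p b = ?p g \<otimes>\<^bsub>?Q\<^esub> ?p b \<otimes>\<^bsub>?Q\<^esub> ?p a"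
    using g a b by (metis Q.m_assoc p.hom_closed)
  \<comment> \<open>\<open>\<phi>\<close> fixes \<open>b\<close> and \<open>\<psi>\<close> fixes \<open>a\<close> modulo \<open>\<Gamma>\<^sub>3\<close>\<close>
  have "?p (\<phi> (\<psi> g)) = ?p g \<otimes>\<^bsub>?Q\<^esub> ?p a \<otimes>\<^bsub>?Q\<^esub> ?p b"
    using lcs_3_coset_fixed[OF \<phi> \<phi>_IA b(1)] g a b by (simp add: \<psi>g \<phi>g)
  also have "\<dots> = ?p g \<otimes>\<^bsub>?Q\<^esub> ?p b \<otimes>\<^bsub>?Q\<^esub> ?p a"
    by (rule ab)
  also have "\<dots> = ?p (\<psi> (\<phi> g))"
    using lcs_3_coset_fixed[OF \<psi> \<psi>_IA a(1)] g a b by (simp add: \<psi>g \<phi>g)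
  finally show ?thesis .
qed

end

section \<open>The Andreadakis filtration of \<open>Aut(G)\<close>\<close>

definition andreadakis_filtration :: "('a, 'b) monoid_scheme \<Rightarrow> nat \<Rightarrow> ('a \<Rightarrow> 'a) set" where
  "andreadakis_filtration G k =
     {\<phi> \<in> auto G. \<forall>g \<in> carrier G. inv\<^bsub>G\<^esub> g \<otimes>\<^bsub>G\<^esub> \<phi> g \<in> lcs G (Suc k)}"

lemma Andreadakis_eq: "Andreadakis n k = andreadakis_filtration (free_group n) k"
  by (simp add: Andreadakis_def andreadakis_filtration_def)

context group
begin

lemma carrier_AutoGroup: "carrier (AutoGroup G) = auto G"
  by (simp add: AutoGroup_def)

lemma mult_AutoGroup:
  "f \<in> auto G \<Longrightarrow> h \<in> auto G \<Longrightarrow> f \<otimes>\<^bsub>AutoGroup G\<^esub> h = compose (carrier G) f h"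
  by (auto simp: AutoGroup_def BijGroup_def auto_def)

lemma one_AutoGroup: "\<one>\<^bsub>AutoGroup G\<^esub> = (\<lambda>x\<in>carrier G. x)"
  by (simp add: AutoGroup_def BijGroup_def)

lemma auto_group_hom: "f \<in> auto G \<Longrightarrow> group_hom G G f"
  by (rule group_homI[OF is_group]) (simp add: auto_def)

lemma inv_AutoGroup_apply:
  assumes f: "f \<in> auto G" and x: "x \<in> carrier G"
  shows "(inv\<^bsub>AutoGroup G\<^esub> f) (f x) = x"
proof -
  interpret Aut: group "AutoGroup G" by (rule AutoGroup)
  interpret f: group_hom G G f by (rule auto_group_hom[OF f])
  have "inv\<^bsub>AutoGroup G\<^esub> f \<otimes>\<^bsub>AutoGroup G\<^esub> f = \<one>\<^bsub>AutoGroup G\<^esub>"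
    using f Aut.l_inv[of f] by (simp add: carrier_AutoGroup)
  then show ?thesis
    using f x Aut.inv_closed[of f] by (metis mult_AutoGroup one_AutoGroup compose_eq
        restrict_apply' carrier_AutoGroup)
qed

lemma inv_mult_in_andreadakis_filtration:
  assumes u: "u \<in> auto G" and v: "v \<in> auto G"
    and uv: "\<forall>g\<in>carrier G. inv (u g) \<otimes> v g \<in> lcs G (Suc k)"
  shows "inv\<^bsub>AutoGroup G\<^esub> u \<otimes>\<^bsub>AutoGroup G\<^esub> v \<in> andreadakis_filtration G k"
proof -
  interpret Aut: group "AutoGroup G" by (rule AutoGroup)
  let ?u' = "inv\<^bsub>AutoGroup G\<^esub> u"
  have u': "?u' \<in> auto G" using Aut.inv_closed u by (simp add: carrier_AutoGroup)
  interpret u: group_hom G G u by (rule auto_group_hom[OF u])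
  interpret v: group_hom G G v by (rule auto_group_hom[OF v])
  interpret u': group_hom G G ?u' by (rule auto_group_hom[OF u'])
  have "inv g \<otimes> ?u' (v g) \<in> lcs G (Suc k)" if g: "g \<in> carrier G" for g
  proof -
    have "?u' (inv (u g) \<otimes> v g) \<in> lcs G (Suc k)"
      using hom_lcs[OF u'.homh] uv g by blast
    also have "?u' (inv (u g) \<otimes> v g) = inv g \<otimes> ?u' (v g)"
      using g inv_AutoGroup_apply[OF u g] by simp
    finally show ?thesis .
  qed
  moreover have "?u' \<otimes>\<^bsub>AutoGroup G\<^esub> v \<in> auto G"
    using u' v Aut.m_closed by (simp add: carrier_AutoGroup)
  ultimately show ?thesis
    using u' v by (simp add: andreadakis_filtration_def mult_AutoGroup compose_eq)
qed

lemma inv_in_andreadakis_filtration: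
  assumes f: "f \<in> andreadakis_filtration G k"
  shows "inv\<^bsub>AutoGroup G\<^esub> f \<in> andreadakis_filtration G k"
proof -
  interpret Aut: group "AutoGroup G" by (rule AutoGroup)
  have fa: "f \<in> auto G" using f by (simp add: andreadakis_filtration_def)
  have "inv (f g) \<otimes> g \<in> lcs G (Suc k)" if g: "g \<in> carrier G" for g
  proof -
    have "inv (inv g \<otimes> f g) \<in> lcs G (Suc k)"
      using f g subgroup.m_inv_closed[OF lcs_subgroup] by (simp add: andreadakis_filtration_def)
    then show ?thesis
      using g auto_group_hom[OF fa] by (simp add: inv_mult_group group_hom.hom_closed)
  qed
  then have "inv\<^bsub>AutoGroup G\<^esub> f \<otimes>\<^bsub>AutoGroup G\<^esub> \<one>\<^bsub>AutoGroup G\<^esub> \<in> andreadakis_filtration G k"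
    using fa id_in_auto by (intro inv_mult_in_andreadakis_filtration) (auto simp: one_AutoGroup)
  then show ?thesis
    using fa Aut.r_one[OF Aut.inv_closed[of f]] by (simp add: carrier_AutoGroup)
qed

lemma mult_in_andreadakis_filtration:
  assumes f: "f \<in> andreadakis_filtration G k" and h: "h \<in> andreadakis_filtration G k"
  shows "f \<otimes>\<^bsub>AutoGroup G\<^esub> h \<in> andreadakis_filtration G k"
proof -
  interpret Aut: group "AutoGroup G" by (rule AutoGroup)
  interpret N: subgroup "lcs G (Suc k)" G by (rule lcs_subgroup)
  have fa: "f \<in> auto G" and ha: "h \<in> auto G" using f h by (simp_all add: andreadakis_filtration_def)
  interpret f: group_hom G G f by (rule auto_group_hom[OF fa])
  interpret h: group_hom G G h by (rule auto_group_hom[OF ha])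
  \<comment> \<open>\<open>g\<^sup>-\<^sup>1 f(h g) = (g\<^sup>-\<^sup>1 f g) \<cdot> f(g\<^sup>-\<^sup>1 h g)\<close>\<close>
  have "inv g \<otimes> f (h g) \<in> lcs G (Suc k)" if g: "g \<in> carrier G" for g
  proof -
    have "inv g \<otimes> f g \<in> lcs G (Suc k)" using f g by (simp add: andreadakis_filtration_def)
    moreover have "inv g \<otimes> h g \<in> lcs G (Suc k)" using h g by (simp add: andreadakis_filtration_def)
    then have "f (inv g \<otimes> h g) \<in> lcs G (Suc k)" by (rule hom_lcs[OF f.homh])
    ultimately have "(inv g \<otimes> f g) \<otimes> f (inv g \<otimes> h g) \<in> lcs G (Suc k)" by (rule N.m_closed)
    then show ?thesis using g by (simp add: m_assoc)
  qed
  moreover have "f \<otimes>\<^bsub>AutoGroup G\<^esub> h \<in> auto G"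
    using Aut.m_closed fa ha by (simp add: carrier_AutoGroup)
  ultimately show ?thesis
    using fa ha by (simp add: andreadakis_filtration_def mult_AutoGroup compose_eq)
qed

lemma andreadakis_filtration_subgroup: "subgroup (andreadakis_filtration G k) (AutoGroup G)"
proof (rule group.subgroupI[OF AutoGroup])
  show "andreadakis_filtration G k \<subseteq> carrier (AutoGroup G)"
    by (auto simp: andreadakis_filtration_def carrier_AutoGroup)
  have "\<one>\<^bsub>AutoGroup G\<^esub> \<in> andreadakis_filtration G k"
    using id_in_auto subgroup.one_closed[OF lcs_subgroup]
    by (auto simp: andreadakis_filtration_def one_AutoGroup)
  then show "andreadakis_filtration G k \<noteq> {}" by blast
qed (simp_all add: inv_in_andreadakis_filtration mult_in_andreadakis_filtration)

lemma commutator_in_andreadakis_filtration: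
  assumes f: "f \<in> andreadakis_filtration G 1" and h: "h \<in> andreadakis_filtration G 1"
  shows "commutator (AutoGroup G) f h \<in> andreadakis_filtration G 2"
proof -
  interpret Aut: group "AutoGroup G" by (rule AutoGroup)
  have fa: "f \<in> auto G" and ha: "h \<in> auto G"
    and f_IA: "\<forall>g\<in>carrier G. inv g \<otimes> f g \<in> lcs G 2"
    and h_IA: "\<forall>g\<in>carrier G. inv g \<otimes> h g \<in> lcs G 2"
    using f h by (simp_all add: andreadakis_filtration_def numeral_2_eq_2)
  interpret f: group_hom G G f by (rule auto_group_hom[OF fa])
  interpret h: group_hom G G h by (rule auto_group_hom[OF ha])
  have hf: "h \<otimes>\<^bsub>AutoGroup G\<^esub> f \<in> auto G" and fh: "f \<otimes>\<^bsub>AutoGroup G\<^esub> h \<in> auto G"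
    using fa ha Aut.m_closed by (simp_all add: carrier_AutoGroup)
  have "commutator (AutoGroup G) f h =
        inv\<^bsub>AutoGroup G\<^esub> (h \<otimes>\<^bsub>AutoGroup G\<^esub> f) \<otimes>\<^bsub>AutoGroup G\<^esub> (f \<otimes>\<^bsub>AutoGroup G\<^esub> h)"
    using fa ha by (simp add: commutator_def Aut.inv_mult_group Aut.m_assoc flip: carrier_AutoGroup)
  also have "\<dots> \<in> andreadakis_filtration G 2"
  proof (rule inv_mult_in_andreadakis_filtration[OF hf fh], intro ballI)
    fix g
    assume g: "g \<in> carrier G"
    have "lcs G 3 #> h (f g) = lcs G 3 #> f (h g)"
      using lcs_3_cosets_commute[OF h.homh h_IA f.homh f_IA g] .
    then have "inv (h (f g)) \<otimes> f (h g) \<in> lcs G 3"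
      using g by (simp add: normal_rcos_eq_iff[OF lcs_normal])
    then show "inv ((h \<otimes>\<^bsub>AutoGroup G\<^esub> f) g) \<otimes> (f \<otimes>\<^bsub>AutoGroup G\<^esub> h) g \<in> lcs G (Suc 2)"
      using fa ha g by (simp add: mult_AutoGroup compose_eq)
  qed
  finally show ?thesis .
qed

end

section \<open>The McCool group lies in \<open>IA\<^sub>n\<close>\<close>

lemma subst_hom_left_inverse:
  assumes f: "\<And>l. l \<in> {1..n} \<Longrightarrow> f l \<in> carrier (free_group n)"
    and g: "\<And>l. l \<in> {1..n} \<Longrightarrow> g l \<in> carrier (free_group n)"
    and fg: "\<And>l. l \<in> {1..n} \<Longrightarrow> subst_hom n f (g l) = [(l, True)]"
    and w: "w \<in> carrier (free_group n)"
  shows "subst_hom n f (subst_hom n g w) = w"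
proof -
  let ?F = "free_group n"
  let ?E = "{x \<in> carrier ?F. (subst_hom n f \<circ> subst_hom n g) x = id x}"
  have "subgroup ?E ?F"
    by (rule group.equalizer_subgroup[OF group_free_group group_free_group
          hom_compose[OF subst_hom_hom[of n g, OF g] subst_hom_hom[of n f, OF f]] iso_imp_homomorphism[OF id_iso]])
  moreover have "subst_hom n g [(l, True)] = g l" if "l \<in> {1..n}" for l
    using subst_hom_generator[OF that] g[OF that] by (simp add: carrier_free_group)
  ultimately have "carrier ?F \<subseteq> ?E"
    using fg generator_in_carrier by (intro free_group_carrier_subset_subgroup) auto
  then show ?thesis using w by auto
qed

lemma andreadakis_filtration_free_groupI:
  assumes \<phi>: "\<phi> \<in> auto (free_group n)"
    and gens: "\<And>l. l \<in> {1..n} \<Longrightarrow>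
      inv\<^bsub>free_group n\<^esub> [(l, True)] \<otimes>\<^bsub>free_group n\<^esub> \<phi> [(l, True)] \<in> lcs (free_group n) (Suc k)"
  shows "\<phi> \<in> andreadakis_filtration (free_group n) k"
proof -
  let ?F = "free_group n"
  have "subgroup {g \<in> carrier ?F. inv\<^bsub>?F\<^esub> g \<otimes>\<^bsub>?F\<^esub> \<phi> g \<in> lcs ?F (Suc k)} ?F"
    using \<phi> by (intro group.twisted_subgroup group.lcs_normal group_free_group) (simp add: auto_def)
  then have "carrier ?F \<subseteq> {g \<in> carrier ?F. inv\<^bsub>?F\<^esub> g \<otimes>\<^bsub>?F\<^esub> \<phi> g \<in> lcs ?F (Suc k)}"
    using gens generator_in_carrier by (intro free_group_carrier_subset_subgroup) auto
  then show ?thesis using \<phi> by (auto simp: andreadakis_filtration_def)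
qed

lemma subgroup_Andreadakis: "subgroup (Andreadakis n k) (AutF n)"
  unfolding Andreadakis_eq by (rule group.andreadakis_filtration_subgroup[OF group_free_group])

definition xi_images :: "nat \<Rightarrow> nat \<Rightarrow> nat \<Rightarrow> letter list" where
  "xi_images i j = (\<lambda>l. if l = i then [(j, False), (i, True), (j, True)] else [(l, True)])"

definition xi_inv_images :: "nat \<Rightarrow> nat \<Rightarrow> nat \<Rightarrow> letter list" where
  "xi_inv_images i j = (\<lambda>l. if l = i then [(j, True), (i, True), (j, False)] else [(l, True)])"

lemma xi_eq_subst_hom: "xi n i j = subst_hom n (xi_images i j)"
  by (simp add: xi_def xi_images_def)

context
  fixes n i j :: nat
  assumes ij: "i \<in> {1..n}" "j \<in> {1..n}" "i \<noteq> j"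
begin

lemma xi_images_in_carrier: "l \<in> {1..n} \<Longrightarrow> xi_images i j l \<in> carrier (free_group n)"
  using ij by (auto simp: xi_images_def carrier_free_group cancels_def)

lemma xi_inv_images_in_carrier: "l \<in> {1..n} \<Longrightarrow> xi_inv_images i j l \<in> carrier (free_group n)"
  using ij by (auto simp: xi_inv_images_def carrier_free_group cancels_def)

lemma subst_hom_xi_images_xi_inv_images:
  "l \<in> {1..n} \<Longrightarrow> subst_hom n (xi_images i j) (xi_inv_images i j l) = [(l, True)]"
  using ij xi_inv_images_in_carrier
  by (auto simp: subst_hom_eq_reduce subst_word_def subst_letter_def xi_images_def
      xi_inv_images_def reduce_eq_foldr reduce_step_def cancels_def inv_word_def)

lemma subst_hom_xi_inv_images_xi_images:
  "l \<in> {1..n} \<Longrightarrow> subst_hom n (xi_inv_images i j) (xi_images i j l) = [(l, True)]"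
  using ij xi_images_in_carrier
  by (auto simp: subst_hom_eq_reduce subst_word_def subst_letter_def xi_images_def
      xi_inv_images_def reduce_eq_foldr reduce_step_def cancels_def inv_word_def)

lemma xi_auto: "xi n i j \<in> auto (free_group n)"
proof -
  let ?F = "free_group n"
  have "bij_betw (subst_hom n (xi_images i j)) (carrier ?F) (carrier ?F)"
  proof (rule bij_betwI)
    show "subst_hom n (xi_images i j) \<in> carrier ?F \<rightarrow> carrier ?F"
      using subst_hom_closed[of n "xi_images i j", OF xi_images_in_carrier] by blast
    show "subst_hom n (xi_inv_images i j) \<in> carrier ?F \<rightarrow> carrier ?F"
      using subst_hom_closed[of n "xi_inv_images i j", OF xi_inv_images_in_carrier] by blast
    show "subst_hom n (xi_inv_images i j) (subst_hom n (xi_images i j) x) = x"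
      if "x \<in> carrier ?F" for x
      by (rule subst_hom_left_inverse[of n "xi_inv_images i j" "xi_images i j",
            OF xi_inv_images_in_carrier xi_images_in_carrier
            subst_hom_xi_inv_images_xi_images that])
    show "subst_hom n (xi_images i j) (subst_hom n (xi_inv_images i j) x) = x"
      if "x \<in> carrier ?F" for x
      by (rule subst_hom_left_inverse[of n "xi_images i j" "xi_inv_images i j",
            OF xi_images_in_carrier xi_inv_images_in_carrier
            subst_hom_xi_images_xi_inv_images that])
  qed
  moreover have "subst_hom n (xi_images i j) \<in> extensional (carrier ?F)"
    by (simp add: subst_hom_def)
  ultimately show ?thesis
    using subst_hom_hom[of n "xi_images i j", OF xi_images_in_carrier] by (simp add: auto_def Bij_def xi_eq_subst_hom)
qed

lemma xi_in_IA: "xi n i j \<in> Andreadakis n 1"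
  unfolding Andreadakis_eq
proof (rule andreadakis_filtration_free_groupI[OF xi_auto])
  fix l
  assume l: "l \<in> {1..n}"
  let ?F = "free_group n"
  show "inv\<^bsub>?F\<^esub> [(l, True)] \<otimes>\<^bsub>?F\<^esub> xi n i j [(l, True)] \<in> lcs ?F (Suc 1)"
  proof (cases "l = i")
    case True
    have "[(i, True)] \<in> lcs ?F (Suc 0)" using ij generator_in_carrier by (simp add: lcs.simps)
    then have comm: "commutator ?F [(i, True)] [(j, True)] \<in> lcs ?F (Suc 1)"
      using group.commutator_in_lcs[OF group_free_group _ generator_in_carrier] ij by simp
    have "inv\<^bsub>?F\<^esub> [(l, True)] \<otimes>\<^bsub>?F\<^esub> xi n i j [(l, True)] = commutator ?F [(i, True)] [(j, True)]"
      using True ij l subst_hom_generator[OF l, of "xi_images i j"] inv_generator[OF l]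
        inv_generator[of j n]
      by (simp add: xi_eq_subst_hom xi_images_def commutator_def mult_free_group reduce_eq_foldr
          reduce_step_def cancels_def)
    with comm show ?thesis by simp
  next
    case False
    then have "xi n i j [(l, True)] = [(l, True)]"
      using subst_hom_generator[OF l, of "xi_images i j"] by (simp add: xi_eq_subst_hom xi_images_def)
    then show ?thesis
      using group.l_inv[OF group_free_group generator_in_carrier[OF l]]
        subgroup.one_closed[OF group.lcs_subgroup[OF group_free_group]]
      by simp
  qed
qed

end

lemma McCool_subset_IA: "McCool n \<subseteq> Andreadakis n 1"
  unfolding McCool_def using xi_in_IA
  by (intro group.generate_subgroup_incl[OF group.AutoGroup[OF group_free_group]])
    (auto simp: subgroup_Andreadakis)

section \<open>Injectivity of \<open>\<tau>\<^sub>1\<close> and \<open>\<A>\<^sub>n(2) \<inter> B\<close>\<close>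

lemma (in group) lcs_2_of_subgroup:
  assumes "subgroup B G"
  shows "lcs (G\<lparr>carrier := B\<rparr>) 2 = generate G (\<Union>x\<in>B. \<Union>y\<in>B. {commutator G x y})"
proof -
  have "commutator (G\<lparr>carrier := B\<rparr>) x y = commutator G x y" if "x \<in> B" "y \<in> B" for x y
    using that m_inv_consistent[OF assms] by (simp add: commutator_def)
  then have "lcs (G\<lparr>carrier := B\<rparr>) 2 = generate (G\<lparr>carrier := B\<rparr>) (\<Union>x\<in>B. \<Union>y\<in>B. {commutator G x y})"
    by (simp add: lcs_2)
  also have "\<dots> = generate G (\<Union>x\<in>B. \<Union>y\<in>B. {commutator G x y})"
    using assms by (intro generate_consistent) (auto simp: commutator_def subgroup.m_closed
        subgroup.m_inv_closed)
  finally show ?thesis .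
qed

lemma (in group) lcs_2_of_subgroup_subgroup:
  assumes B: "subgroup B G"
  shows "subgroup (lcs (G\<lparr>carrier := B\<rparr>) 2) G" and "lcs (G\<lparr>carrier := B\<rparr>) 2 \<subseteq> B"
proof -
  have T: "(\<Union>x\<in>B. \<Union>y\<in>B. {commutator G x y}) \<subseteq> B"
    using B by (auto simp: commutator_def subgroup.m_closed subgroup.m_inv_closed)
  then show "subgroup (lcs (G\<lparr>carrier := B\<rparr>) 2) G"
    using subgroup.subset[OF B] by (auto simp: lcs_2_of_subgroup[OF B] intro: generate_is_subgroup)
  show "lcs (G\<lparr>carrier := B\<rparr>) 2 \<subseteq> B"
    using generate_subgroup_incl[OF T B] by (simp add: lcs_2_of_subgroup[OF B])
qed

lemma commutator_subgroup_subset_Andreadakis: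
  assumes B: "subgroup B (AutF n)" and IA: "B \<subseteq> Andreadakis n 1"
  shows "lcs (subgrp n B) 2 \<subseteq> Andreadakis n 2"
proof -
  interpret Aut: group "AutF n" by (rule group.AutoGroup[OF group_free_group])
  have "commutator (AutF n) x y \<in> Andreadakis n 2" if "x \<in> B" "y \<in> B" for x y
  proof -
    have "x \<in> andreadakis_filtration (free_group n) 1" "y \<in> andreadakis_filtration (free_group n) 1"
      using that IA unfolding Andreadakis_eq by blast+
    from group.commutator_in_andreadakis_filtration[OF group_free_group this]
    show ?thesis by (simp only: Andreadakis_eq)
  qed
  then show ?thesis
    unfolding Aut.lcs_2_of_subgroup[OF B] Andreadakis_eq
    by (intro Aut.generate_subgroup_incl group.andreadakis_filtration_subgroup[OF group_free_group])
      (auto simp: Andreadakis_eq)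
qed

lemma tau1_rcos:
  assumes N: "subgroup N (AutF n)" and NA: "N \<subseteq> Andreadakis n 2" and a: "a \<in> carrier (AutF n)"
  shows "tau1 n (N #>\<^bsub>AutF n\<^esub> a) = Andreadakis n 2 #>\<^bsub>AutF n\<^esub> a"
proof -
  interpret Aut: group "AutF n" by (rule group.AutoGroup[OF group_free_group])
  note A2 = subgroup_Andreadakis[of n 2]
  have "Andreadakis n 2 #>\<^bsub>AutF n\<^esub> (g \<otimes>\<^bsub>AutF n\<^esub> a) = Andreadakis n 2 #>\<^bsub>AutF n\<^esub> a"
    if g: "g \<in> N" for g
  proof -
    have g': "g \<in> carrier (AutF n)" using g subgroup.subset[OF N] by blast
    have "Andreadakis n 2 #>\<^bsub>AutF n\<^esub> (g \<otimes>\<^bsub>AutF n\<^esub> a) =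
          (Andreadakis n 2 #>\<^bsub>AutF n\<^esub> g) #>\<^bsub>AutF n\<^esub> a"
      by (rule Aut.coset_mult_assoc[OF subgroup.subset[OF A2] g' a, symmetric])
    also have "\<dots> = Andreadakis n 2 #>\<^bsub>AutF n\<^esub> a"
      using Aut.coset_join2[OF g' A2] g NA by auto
    finally show ?thesis .
  qed
  then show ?thesis
    using Aut.rcos_self[OF a N] by (auto simp: tau1_def r_coset_def[of _ N])
qed

lemma rcos_in_carrier_Mod_subgrp:
  "a \<in> B \<Longrightarrow> N #>\<^bsub>AutF n\<^esub> a \<in> carrier (subgrp n B Mod N)"
  by (auto simp: carrier_FactGroup r_coset_def)

lemma Andreadakis_2_inter_subset_lcs_2:
  assumes B: "subgroup B (AutF n)" and IA: "B \<subseteq> Andreadakis n 1"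
    and inj: "inj_on (tau1 n) (carrier (gr1 n B))"
  shows "Andreadakis n 2 \<inter> B \<subseteq> lcs (subgrp n B) 2"
proof
  let ?\<Gamma> = "lcs (subgrp n B) 2"
  interpret Aut: group "AutF n" by (rule group.AutoGroup[OF group_free_group])
  note A2 = subgroup_Andreadakis[of n 2]
  have \<Gamma>: "subgroup ?\<Gamma> (AutF n)" by (rule Aut.lcs_2_of_subgroup_subgroup(1)[OF B])
  note \<tau>\<^sub>1 = tau1_rcos[OF \<Gamma> commutator_subgroup_subset_Andreadakis[OF B IA]]
  fix b
  assume b: "b \<in> Andreadakis n 2 \<inter> B"
  then have b': "b \<in> carrier (AutF n)" using subgroup.subset[OF B] by blast
  have "tau1 n (?\<Gamma> #>\<^bsub>AutF n\<^esub> b) = Andreadakis n 2 #>\<^bsub>AutF n\<^esub> b"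
    by (rule \<tau>\<^sub>1[OF b'])
  also have "\<dots> = Andreadakis n 2 #>\<^bsub>AutF n\<^esub> \<one>\<^bsub>AutF n\<^esub>"
    using Aut.coset_join2[OF b' A2] b subgroup.subset[OF A2] by simp
  also have "\<dots> = tau1 n (?\<Gamma> #>\<^bsub>AutF n\<^esub> \<one>\<^bsub>AutF n\<^esub>)"
    by (rule \<tau>\<^sub>1[OF Aut.one_closed, symmetric])
  finally have "tau1 n (?\<Gamma> #>\<^bsub>AutF n\<^esub> b) = tau1 n (?\<Gamma> #>\<^bsub>AutF n\<^esub> \<one>\<^bsub>AutF n\<^esub>)" .
  then have "?\<Gamma> #>\<^bsub>AutF n\<^esub> b = ?\<Gamma> #>\<^bsub>AutF n\<^esub> \<one>\<^bsub>AutF n\<^esub>"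
    using inj_onD[OF inj] b subgroup.one_closed[OF B] rcos_in_carrier_Mod_subgrp by blast
  then show "b \<in> ?\<Gamma>"
    using Aut.coset_join1[OF _ b' \<Gamma>] subgroup.subset[OF \<Gamma>] by simp
qed

theorem proposition2p2p7:
  fixes n :: nat and B :: "(letter list \<Rightarrow> letter list) set"
  assumes "n \<ge> 2"
    and "subgroup B (AutF n)"
    and "B \<subseteq> McCool n"
    and "inj_on (tau1 n) (carrier (gr1 n B))"
  shows "Andreadakis n 2 \<inter> B = lcs (subgrp n B) 2"
proof
  have IA: "B \<subseteq> Andreadakis n 1" using assms(3) McCool_subset_IA by blast
  then show "Andreadakis n 2 \<inter> B \<subseteq> lcs (subgrp n B) 2"
    using Andreadakis_2_inter_subset_lcs_2 assms(2,4) by blast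
  show "lcs (subgrp n B) 2 \<subseteq> Andreadakis n 2 \<inter> B"
    using commutator_subgroup_subset_Andreadakis[OF assms(2) IA]
      group.lcs_2_of_subgroup_subgroup(2)[OF group.AutoGroup[OF group_free_group] assms(2)]
    by blast
qed

end
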